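(* Let $I$ be a monomial ideal of $R=K[x_1,\ldots,x_d]$ ($K$ a field) and let $r,s\in\mathbb{R}$, $r,s\ge0$. Then (1) if $s\ge r\ge0$, then $\overline{I^s}\subseteq\overline{I^r}$; (2) $\overline{I^s}\cdot\overline{I^r}\subseteq\overline{I^{s+r}}$.
   Context: $\mathbb{N}$ denotes the non-negative integers and $\mathbf{x}^{\mathbf{a}}=x_1^{a_1}\cdots x_d^{a_d}$. $NP(I)$ is the convex hull in $\mathbb{R}^d$ of $\{\mathbf{a}\in\mathbb{N}^d\mid \mathbf{x}^{\mathbf{a}}\in I\}$. For real $t\ge0$, the $t$-th real power of $I$ is $\overline{I^t}=(\{\mathbf{x}^{\mathbf{a}}\mid \mathbf{a}\in t\cdot NP(I)\cap\mathbb{N}^d\})$, where $t\cdot NP(I)=\{t\mathbf{v}\mid\mathbf{v}\in NP(I)\}$. *)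

theory Defs
  imports "HOL-Analysis.Analysis" "HOL-Library.Poly_Mapping"
begin

text \<open>The polynomial ring K[x_i : i in 'n] over a field K with finitely many variables
  indexed by the finite type 'n (d = CARD('n)) is modelled
  as finitely supported maps from exponent vectors to coefficients.\<close>

type_synonym ('n, 'k) mpoly = "('n \<Rightarrow>\<^sub>0 nat) \<Rightarrow>\<^sub>0 'k"

definition monom :: "('n \<Rightarrow>\<^sub>0 nat) \<Rightarrow> ('n, 'k::zero_neq_one) mpoly" where
  "monom a = Poly_Mapping.single a 1"

definition is_ideal :: "('n, 'k::comm_ring_1) mpoly set \<Rightarrow> bool" where
  "is_ideal I \<longleftrightarrow> 0 \<in> I \<and> (\<forall>f\<in>I. \<forall>g\<in>I. f + g \<in> I) \<and> (\<forall>f\<in>I. \<forall>r. r * f \<in> I)"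

definition ideal_gen :: "('n, 'k::comm_ring_1) mpoly set \<Rightarrow> ('n, 'k) mpoly set" where
  "ideal_gen S = \<Inter>{I. is_ideal I \<and> S \<subseteq> I}"

definition monomial_ideal :: "('n, 'k::comm_ring_1) mpoly set \<Rightarrow> bool" where
  "monomial_ideal I \<longleftrightarrow> is_ideal I \<and> I = ideal_gen {monom a | a. monom a \<in> I}"

definition ideal_prod :: "('n, 'k::comm_ring_1) mpoly set \<Rightarrow> ('n, 'k) mpoly set \<Rightarrow> ('n, 'k) mpoly set" where
  "ideal_prod I J = ideal_gen {f * g | f g. f \<in> I \<and> g \<in> J}"

definition expv :: "('n::finite \<Rightarrow>\<^sub>0 nat) \<Rightarrow> real ^ 'n" where
  "expv a = (\<chi> i. real (Poly_Mapping.lookup a i))"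

definition newton_poly :: "('n::finite, 'k::comm_ring_1) mpoly set \<Rightarrow> (real ^ 'n) set" where
  "newton_poly I = convex hull {expv a | a. monom a \<in> I}"

definition real_power :: "('n::finite, 'k::comm_ring_1) mpoly set \<Rightarrow> real \<Rightarrow> ('n, 'k) mpoly set" where
  "real_power I t = ideal_gen {monom a | a. expv a \<in> (\<lambda>v. t *\<^sub>R v) ` newton_poly I}"

end

theory Submission
  imports Defs
begin

text \<open>Both inclusions are checked on monomial generators. Since I is closed under
  multiplication, its exponent set is closed under addition, so the convex set NP(I) satisfies
  \<open>c \<cdot> NP(I) \<subseteq> NP(I)\<close> for \<open>c \<ge> 1\<close>; hence \<open>s \<cdot> NP(I) \<subseteq> r \<cdot> NP(I)\<close> for \<open>s \<ge> r > 0\<close>.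
  For products, convexity gives \<open>s v + r w = (s + r) (s/(s+r) v + r/(s+r) w) \<in> (s + r) \<cdot> NP(I)\<close>.\<close>

lemma is_ideal_ideal_gen: "is_ideal (ideal_gen S)"
  unfolding ideal_gen_def is_ideal_def by blast

lemma ideal_gen_superset: "S \<subseteq> ideal_gen S"
  unfolding ideal_gen_def by blast

lemma ideal_gen_least: "is_ideal J \<Longrightarrow> S \<subseteq> J \<Longrightarrow> ideal_gen S \<subseteq> J"
  unfolding ideal_gen_def by blast

lemma is_ideal_mult_left: "is_ideal I \<Longrightarrow> f \<in> I \<Longrightarrow> g * f \<in> I"
  unfolding is_ideal_def by blast

lemma is_ideal_colon: "is_ideal J \<Longrightarrow> is_ideal {g. f * g \<in> J}"
  unfolding is_ideal_def by (auto simp: distrib_left mult.left_commute)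

lemma ideal_gen_mult_mem:
  assumes J: "is_ideal J" and gens: "\<And>a b. a \<in> A \<Longrightarrow> b \<in> B \<Longrightarrow> a * b \<in> J"
    and f: "f \<in> ideal_gen A" and g: "g \<in> ideal_gen B"
  shows "f * g \<in> J"
proof -
  have gen_right: "f * b \<in> J" if "b \<in> B" for b
  proof -
    have "A \<subseteq> {x. b * x \<in> J}"
      using gens that by (simp add: subset_iff mult.commute)
    then have "ideal_gen A \<subseteq> {x. b * x \<in> J}"
      by (rule ideal_gen_least[OF is_ideal_colon[OF J]])
    then have "b * f \<in> J"
      using f by blast
    then show ?thesis
      by (simp only: mult.commute)
  qed
  have "B \<subseteq> {g. f * g \<in> J}"
    using gen_right by blast
  then show ?thesis
    using ideal_gen_least[OF is_ideal_colon[OF J]] g by blast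
qed

lemma ideal_prod_ideal_gen_subset:
  assumes "is_ideal J" and "\<And>a b. a \<in> A \<Longrightarrow> b \<in> B \<Longrightarrow> a * b \<in> J"
  shows "ideal_prod (ideal_gen A) (ideal_gen B) \<subseteq> J"
  unfolding ideal_prod_def
  using ideal_gen_mult_mem[OF assms] by (intro ideal_gen_least[OF assms(1)]) blast

lemma monom_mult: "(monom a :: ('n, 'k::comm_ring_1) mpoly) * monom b = monom (a + b)"
  unfolding monom_def by (simp add: mult_single)

lemma expv_add: "expv (a + b) = expv a + expv b"
  unfolding expv_def by (simp add: vec_eq_iff lookup_add)

lemma expv_0: "expv 0 = 0"
  unfolding expv_def by (simp add: vec_eq_iff)

lemma convex_hull_scaleR_closed:
  fixes S :: "'a::real_vector set"
  assumes "\<And>x. x \<in> S \<Longrightarrow> c *\<^sub>R x \<in> convex hull S" and "v \<in> convex hull S"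
  shows "c *\<^sub>R v \<in> convex hull S"
proof -
  have "(\<lambda>x. c *\<^sub>R x) ` S \<subseteq> convex hull S"
    using assms(1) by blast
  then have "convex hull ((\<lambda>x. c *\<^sub>R x) ` S) \<subseteq> convex hull S"
    by (rule hull_minimal) (rule convex_convex_hull)
  then show ?thesis
    using assms(2) unfolding convex_hull_scaling by blast
qed

lemma scaleR_add_mem_scaled_convex:
  fixes C :: "'a::real_vector set"
  assumes "convex C" "v \<in> C" "w \<in> C" "0 \<le> s" "0 \<le> r"
  shows "s *\<^sub>R v + r *\<^sub>R w \<in> (\<lambda>x. (s + r) *\<^sub>R x) ` C"
proof (cases "s + r = 0")
  case True
  with assms(4,5) have "s = 0" "r = 0"
    by linarith+
  then have "s *\<^sub>R v + r *\<^sub>R w = (s + r) *\<^sub>R v"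
    by simp
  then show ?thesis
    using assms(2) by blast
next
  case False
  then have "s + r > 0"
    using assms(4,5) by simp
  then have "s *\<^sub>R v + r *\<^sub>R w = (s + r) *\<^sub>R ((s / (s + r)) *\<^sub>R v + (r / (s + r)) *\<^sub>R w)"
    by (simp add: scaleR_add_right)
  moreover have "(s / (s + r)) *\<^sub>R v + (r / (s + r)) *\<^sub>R w \<in> C"
    using mem_convex_alt[OF assms] \<open>s + r > 0\<close> by simp
  ultimately show ?thesis
    by blast
qed

lemma monom_multiple_mem:
  fixes I :: "('n::finite, 'k::comm_ring_1) mpoly set"
  assumes "is_ideal I" "monom a \<in> I" "1 \<le> k"
  shows "\<exists>b. monom b \<in> I \<and> expv b = real k *\<^sub>R expv a"
  using assms(3)
proof (induction k rule: dec_induct)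
  case base
  then show ?case
    using assms(2) by auto
next
  case (step k)
  then obtain b where b: "monom b \<in> I" "expv b = real k *\<^sub>R expv a"
    by blast
  have "monom (b + a) \<in> I"
    using is_ideal_mult_left[OF assms(1) b(1), of "monom a"] by (simp add: monom_mult add.commute)
  moreover have "expv (b + a) = real (Suc k) *\<^sub>R expv a"
    using b(2) by (simp add: expv_add algebra_simps)
  ultimately show ?case
    by blast
qed

lemma scaleR_expv_mem_newton_poly:
  fixes I :: "('n::finite, 'k::comm_ring_1) mpoly set"
  assumes I: "is_ideal I" and a: "monom a \<in> I" and c: "1 \<le> c"
  shows "c *\<^sub>R expv a \<in> newton_poly I"
proof -
  \<comment> \<open>\<open>c \<cdot> a\<close> lies on the segment between the exponents \<open>\<lfloor>c\<rfloor> \<cdot> a\<close> and \<open>(\<lfloor>c\<rfloor> + 1) \<cdot> a\<close> of \<open>I\<close>.\<close>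
  define k where "k = nat \<lfloor>c\<rfloor>"
  have k: "1 \<le> k" "real k \<le> c" "c < real k + 1"
    using c unfolding k_def by linarith+
  obtain b1 where b1: "monom b1 \<in> I" "expv b1 = real k *\<^sub>R expv a"
    using monom_multiple_mem[OF I a k(1)] by blast
  obtain b2 where b2: "monom b2 \<in> I" "expv b2 = real (Suc k) *\<^sub>R expv a"
    using monom_multiple_mem[OF I a] k(1) by (meson le_SucI)
  have "expv b1 \<in> newton_poly I" "expv b2 \<in> newton_poly I"
    using b1(1) b2(1) unfolding newton_poly_def by (auto intro: hull_inc)
  then have "(1 - (c - real k)) *\<^sub>R expv b1 + (c - real k) *\<^sub>R expv b2 \<in> newton_poly I"
    unfolding newton_poly_def using k by (intro convexD_alt convex_convex_hull) auto
  moreover have "(1 - (c - real k)) *\<^sub>R expv b1 + (c - real k) *\<^sub>R expv b2 = c *\<^sub>R expv a"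
    unfolding b1(2) b2(2) by (simp add: algebra_simps)
  ultimately show ?thesis
    by simp
qed

lemma newton_poly_scaleR_closed:
  fixes I :: "('n::finite, 'k::comm_ring_1) mpoly set"
  assumes I: "is_ideal I" and v: "v \<in> newton_poly I" and c: "1 \<le> c"
  shows "c *\<^sub>R v \<in> newton_poly I"
proof -
  have "c *\<^sub>R x \<in> convex hull {expv a |a. monom a \<in> I}"
    if "x \<in> {expv a |a. monom a \<in> I}" for x
    using that scaleR_expv_mem_newton_poly[OF I _ c] unfolding newton_poly_def by blast
  then show ?thesis
    using v unfolding newton_poly_def by (rule convex_hull_scaleR_closed)
qed

lemma is_ideal_real_power: "is_ideal (real_power I t)"
  unfolding real_power_def by (rule is_ideal_ideal_gen)

lemma monom_mem_real_power:
  "v \<in> newton_poly I \<Longrightarrow> expv a = t *\<^sub>R v \<Longrightarrow> monom a \<in> real_power I t"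
  unfolding real_power_def by (rule subsetD[OF ideal_gen_superset]) blast

lemma real_power_least:
  assumes "is_ideal J"
    and "\<And>a v. v \<in> newton_poly I \<Longrightarrow> expv a = t *\<^sub>R v \<Longrightarrow> monom a \<in> J"
  shows "real_power I t \<subseteq> J"
  unfolding real_power_def using assms by (intro ideal_gen_least) auto

lemma real_power_antimono:
  fixes I :: "('n::finite, 'k::comm_ring_1) mpoly set"
  assumes I: "is_ideal I" and "0 \<le> r" "r \<le> s"
  shows "real_power I s \<subseteq> real_power I r"
proof (rule real_power_least)
  show "is_ideal (real_power I r)"
    by (rule is_ideal_real_power)
next
  fix a v assume v: "v \<in> newton_poly I" and a: "expv a = s *\<^sub>R v"
  show "monom a \<in> real_power I r"
  proof (cases "r = 0")
    case True
    \<comment> \<open>\<open>0 \<cdot> NP(I) = {0}\<close> since \<open>v \<in> NP(I)\<close>, so \<open>monom 0 = 1\<close> lies in the real power.\<close>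
    then have "expv 0 = r *\<^sub>R v"
      by (simp add: expv_0)
    then have "monom 0 \<in> real_power I r"
      by (rule monom_mem_real_power[OF v])
    then have "monom a * monom 0 \<in> real_power I r"
      by (rule is_ideal_mult_left[OF is_ideal_real_power])
    then show ?thesis
      by (simp add: monom_mult)
  next
    case False
    with \<open>0 \<le> r\<close> have "r > 0" by simp
    have "1 \<le> s / r"
      using \<open>r > 0\<close> \<open>r \<le> s\<close> by simp
    then have "(s / r) *\<^sub>R v \<in> newton_poly I"
      by (rule newton_poly_scaleR_closed[OF I v])
    moreover have "expv a = r *\<^sub>R ((s / r) *\<^sub>R v)"
      using a \<open>r > 0\<close> by simp
    ultimately show ?thesis
      by (rule monom_mem_real_power)
  qed
qed

lemma ideal_prod_real_power_subset:
  fixes I :: "('n::finite, 'k::comm_ring_1) mpoly set"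
  assumes "0 \<le> s" "0 \<le> r"
  shows "ideal_prod (real_power I s) (real_power I r) \<subseteq> real_power I (s + r)"
  unfolding real_power_def[of I s] real_power_def[of I r]
proof (rule ideal_prod_ideal_gen_subset[OF is_ideal_real_power])
  fix f g :: "('n, 'k) mpoly"
  assume "f \<in> {monom a |a. expv a \<in> (\<lambda>x. s *\<^sub>R x) ` newton_poly I}"
    and "g \<in> {monom b |b. expv b \<in> (\<lambda>x. r *\<^sub>R x) ` newton_poly I}"
  then obtain a b v w where fg: "f = monom a" "g = monom b"
    and vw: "v \<in> newton_poly I" "w \<in> newton_poly I" "expv a = s *\<^sub>R v" "expv b = r *\<^sub>R w"
    by blast
  have "s *\<^sub>R v + r *\<^sub>R w \<in> (\<lambda>x. (s + r) *\<^sub>R x) ` newton_poly I"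
    using vw(1,2) assms unfolding newton_poly_def
    by (intro scaleR_add_mem_scaled_convex convex_convex_hull)
  then obtain u where "u \<in> newton_poly I" "expv (a + b) = (s + r) *\<^sub>R u"
    by (auto simp: expv_add vw(3,4))
  then have "monom (a + b) \<in> real_power I (s + r)"
    by (rule monom_mem_real_power)
  then show "f * g \<in> real_power I (s + r)"
    by (simp add: fg monom_mult)
qed

theorem lemma5p1:
  fixes I :: "('n::finite, 'k::field) mpoly set" and r s :: real
  assumes "monomial_ideal I" and "r \<ge> 0" and "s \<ge> 0"
  shows "(s \<ge> r \<longrightarrow> real_power I s \<subseteq> real_power I r)
         \<and> ideal_prod (real_power I s) (real_power I r) \<subseteq> real_power I (s + r)"
proof -
  have "is_ideal I"
    using assms(1) unfolding monomial_ideal_def by blast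
  then show ?thesis
    using real_power_antimono ideal_prod_real_power_subset assms(2,3) by blast
qed

end
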